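(* Let $h,r>0$ with $\frac hr\le\omega$. Then on $[-h,h]$, $$\frac{d}{dx}\left(\frac{1}{\rho_0}\,f'(\rho_0')\right)\ge0,$$ where $f'(t)=\frac{t(t^2+2)}{(1+t^2)^{3/2}}$ (the derivative of $f(t)=t^2/\sqrt{1+t^2}$).
   Context: Let $\Xi$ be the unique positive solution of $\xi\tanh\frac1\xi+\mathrm{sech}^2\frac1\xi=\xi$, and $\omega=\frac{1}{\Xi\cosh(1/\Xi)}$. Under $h/r\le\omega$, let $\Pi_0>0$ be the largest solution of $r=\Pi\cosh\frac{h}{\Pi}$ and $\rho_0(x)=\Pi_0\cosh\frac{x}{\Pi_0}$ on $[-h,h]$. *)

theory Defs
  imports "HOL-Analysis.Analysis"
begin

definition Xi :: real where
  "Xi = (THE \<xi>::real. \<xi> > 0 \<and> \<xi> * tanh (1/\<xi>) + 1 / (cosh (1/\<xi>))^2 = \<xi>)"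

definition omega :: real where
  "omega = 1 / (Xi * cosh (1/Xi))"

definition Pi0 :: "real \<Rightarrow> real \<Rightarrow> real" where
  "Pi0 h r = (GREATEST P::real. P > 0 \<and> r = P * cosh (h/P))"

definition rho0 :: "real \<Rightarrow> real \<Rightarrow> real \<Rightarrow> real" where
  "rho0 h r x = Pi0 h r * cosh (x / Pi0 h r)"

definition fprime :: "real \<Rightarrow> real" where
  "fprime t = t * (t^2 + 2) / (1 + t^2) powr (3/2)"

end

theory Submission
  imports Defs
begin

text \<open>
  With \<open>P = Pi0 h r\<close> we have \<open>rho0 = P cosh (x/P)\<close> and \<open>rho0' = sinh (x/P)\<close>, so the quantity
  in question is \<open>g (x/P) / P\<close> with \<open>g t = f'(sinh t) / cosh t = sinh t (sinh\<^sup>2 t + 2) / cosh\<^sup>4 t\<close>, whose derivative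
  is \<open>(4 - cosh\<^sup>4 t - cosh\<^sup>2 t) / cosh\<^sup>5 t\<close>. This is nonnegative as long as \<open>cosh t \<le> 1.24\<close>.
  Substituting \<open>u = 1/\<xi>\<close> turns the equation for \<open>Xi\<close> into \<open>e\<^sup>-\<^sup>2\<^sup>u = 2u - 1\<close>, whose root
  \<open>1/Xi\<close> lies below \<open>0.645\<close>; and since \<open>u / cosh u\<close> increases on \<open>[0, 1]\<close>, the hypothesis
  \<open>h/r \<le> omega\<close> forces \<open>h/P \<le> 1/Xi\<close>. Hence \<open>|x/P| \<le> 0.645\<close> on \<open>[-h, h]\<close>, where
  \<open>cosh \<le> 1.24\<close>.
\<close>

lemma exp_129_200_ge: "189/100 \<le> exp (129/200::real)"
proof -
  have "(189/100::real) \<le> (1 + (129/200) / real 32) ^ 32"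
    by (simp add: power_divide)
  also have "\<dots> \<le> exp (129/200)"
    by (rule exp_ge_one_plus_x_over_n_power_n) auto
  finally show ?thesis .
qed

lemma exp_129_200_le: "exp (129/200::real) \<le> 193/100"
proof -
  have "exp (129/200::real) = exp (129/3200) ^ 16"
    by (simp flip: exp_of_nat_mult)
  also have "\<dots> \<le> (1 + 129/3200 + (129/3200)\<^sup>2) ^ 16"
    by (intro power_mono exp_bound) auto
  also have "\<dots> \<le> 193/100"
    by (simp add: power_divide)
  finally show ?thesis .
qed

lemma cosh_le_124_100:
  fixes x :: real
  assumes "\<bar>x\<bar> \<le> 129/200"
  shows "cosh x \<le> 124/100"
proof -
  have "cosh x = cosh \<bar>x\<bar>"
    by simp
  also have "\<dots> \<le> cosh (129/200)"
    using assms by (subst cosh_real_nonneg_le_iff) auto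
  also have "\<dots> = (exp (129/200) + 1 / exp (129/200)) / 2"
    by (simp add: cosh_def exp_minus field_simps)
  also have "\<dots> \<le> (193/100 + 100/189) / 2"
    using exp_129_200_ge exp_129_200_le by (intro divide_right_mono add_mono) (auto simp: field_simps)
  also have "\<dots> \<le> 124/100"
    by simp
  finally show ?thesis .
qed

lemma Xi_equation_iff:
  fixes u :: real
  assumes "u > 0"
  shows "(1/u) * tanh u + 1 / (cosh u)\<^sup>2 = 1/u \<longleftrightarrow> exp (-2*u) = 2*u - 1"
proof -
  have "(1/u) * tanh u + 1 / (cosh u)\<^sup>2 - 1/u
          = (sinh u * cosh u + u - (cosh u)\<^sup>2) / (u * (cosh u)\<^sup>2)"
    using assms by (simp add: tanh_def field_simps power2_eq_square)
  then have "(1/u) * tanh u + 1 / (cosh u)\<^sup>2 = 1/u \<longleftrightarrow> sinh u * cosh u + u = (cosh u)\<^sup>2"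
    using assms by (smt (verit) divide_eq_0_iff mult_eq_0_iff power_eq_0_iff cosh_real_pos)
  also have "\<dots> \<longleftrightarrow> exp (-2*u) = 2*u - 1"
  proof -
    have "exp (-2*u) = (exp (-u))\<^sup>2"
      by (simp flip: exp_of_nat_mult)
    moreover have "exp u * exp (-u) = 1"
      by (simp flip: exp_add)
    ultimately show ?thesis
      unfolding sinh_def cosh_def by (simp add: field_simps power2_eq_square) algebra
  qed
  finally show ?thesis .
qed

lemma strict_mono_Xi_defect: "strict_mono (\<lambda>u::real. 2*u - 1 - exp (-2*u))"
proof (rule strict_monoI)
  fix x y :: real
  assume "x < y"
  moreover from this have "exp (-2*y) < exp (-2*x)"
    by simp
  ultimately show "2*x - 1 - exp (-2*x) < 2*y - 1 - exp (-2*y)"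
    by linarith
qed

lemma Xi_root_exists: "\<exists>u::real. 0 < u \<and> u < 129/200 \<and> exp (-2*u) = 2*u - 1"
proof -
  let ?G = "\<lambda>u::real. 2*u - 1 - exp (-2*u)"
  have "exp (-2 * (129/200)) = 1 / (exp (129/200::real))\<^sup>2"
    by (simp add: exp_minus inverse_eq_divide power2_eq_square flip: exp_add)
  also have "\<dots> \<le> 1 / (189/100)\<^sup>2"
    using exp_129_200_ge by (intro divide_left_mono power_mono) auto
  also have "\<dots> < 29/100"
    by (simp add: power_divide)
  finally have G_right: "?G (129/200) > 0"
    by simp
  have "?G 0 < 0"
    by simp
  then obtain u where u: "0 \<le> u" "u \<le> 129/200" "?G u = 0"
    using IVT[of ?G 0 0 "129/200"] G_right by (force intro: continuous_intros)
  moreover have "u \<noteq> 0"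
    using u by auto
  moreover have "u \<noteq> 129/200"
  proof
    assume "u = 129/200"
    with u(3) G_right show False
      by simp
  qed
  ultimately show ?thesis
    by (intro exI[of _ u]) auto
qed

lemma Xi_pos: "Xi > 0"
  and inverse_Xi_less: "1 / Xi < 129/200"
proof -
  obtain u :: real where u: "0 < u" "u < 129/200" "exp (-2*u) = 2*u - 1"
    using Xi_root_exists by blast
  have "Xi = 1/u"
    unfolding Xi_def
  proof (rule the_equality)
    show "1/u > 0 \<and> 1/u * tanh (1/(1/u)) + 1 / (cosh (1/(1/u)))\<^sup>2 = 1/u"
      using u Xi_equation_iff[of u] by simp
  next
    fix \<xi> :: real
    assume "\<xi> > 0 \<and> \<xi> * tanh (1/\<xi>) + 1 / (cosh (1/\<xi>))\<^sup>2 = \<xi>"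
    then have "exp (-2 * (1/\<xi>)) = 2 * (1/\<xi>) - 1"
      using Xi_equation_iff[of "1/\<xi>"] by simp
    with u have "1/\<xi> = u"
      using strict_mono_eq[OF strict_mono_Xi_defect, of "1/\<xi>" u] by simp
    then show "\<xi> = 1/u"
      by auto
  qed
  then show "Xi > 0" "1 / Xi < 129/200"
    unfolding \<open>Xi = 1/u\<close> using u by simp_all
qed

lemma div_cosh_strict_mono:
  fixes a b :: real
  assumes "0 \<le> a" "a < b" "b \<le> 1"
  shows "a / cosh a < b / cosh b"
proof (rule DERIV_pos_imp_increasing[OF assms(2)])
  fix x
  assume x: "a \<le> x" "x \<le> b"
  have "x * sinh x \<le> 1 * sinh x"
    using x assms by (intro mult_right_mono) auto
  then have "(cosh x - x * sinh x) / (cosh x)\<^sup>2 > 0"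
    using sinh_less_cosh_real[of x] by simp
  moreover have "((\<lambda>u. u / cosh u) has_real_derivative (cosh x - x * sinh x) / (cosh x)\<^sup>2) (at x)"
    by (auto intro!: derivative_eq_intros simp: power2_eq_square)
  ultimately show "\<exists>y. ((\<lambda>u. u / cosh u) has_real_derivative y) (at x) \<and> y > 0"
    by blast
qed

lemma Pi0_eq:
  fixes h r u :: real
  assumes "h > 0" "0 < u" "u \<le> 1" "u / cosh u = h / r"
  shows "Pi0 h r = h / u"
  unfolding Pi0_def
proof (rule Greatest_equality)
  have "r \<noteq> 0"
    using assms by auto
  then show "h / u > 0 \<and> r = h / u * cosh (h / (h / u))"
    using assms by (auto simp: field_simps)
next
  fix Q :: real
  assume Q: "Q > 0 \<and> r = Q * cosh (h / Q)"
  show "Q \<le> h / u"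
  proof (rule ccontr)
    assume "\<not> Q \<le> h / u"
    then have "h / Q < u"
      using assms Q by (auto simp: field_simps)
    moreover have "0 \<le> h / Q"
      using assms Q by simp
    ultimately have "(h / Q) / cosh (h / Q) < u / cosh u"
      using div_cosh_strict_mono assms(3) by blast
    also have "u / cosh u = (h / Q) / cosh (h / Q)"
      using assms(4) Q by simp
    finally show False
      by simp
  qed
qed

lemma Pi0_pos_and_ratio_le:
  fixes h r :: real
  assumes "h > 0" "r > 0" "h / r \<le> omega"
  shows "Pi0 h r > 0" "h / Pi0 h r \<le> 1 / Xi"
proof -
  have "omega = (1/Xi) / cosh (1/Xi)"
    by (simp add: omega_def)
  then have "0 / cosh 0 \<le> h / r" "h / r \<le> (1/Xi) / cosh (1/Xi)"
    using assms by auto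
  moreover have "1/Xi \<ge> 0"
    using Xi_pos by simp
  ultimately obtain u where u: "0 \<le> u" "u \<le> 1/Xi" "u / cosh u = h / r"
    using IVT[of "\<lambda>u. u / cosh u" 0 "h/r" "1/Xi"] by (force intro: continuous_intros)
  have "u \<noteq> 0"
    using assms u by auto
  then have "u > 0"
    using u by simp
  moreover have "u \<le> 1"
    using u inverse_Xi_less by linarith
  ultimately have "Pi0 h r = h / u"
    using Pi0_eq assms u by blast
  then show "Pi0 h r > 0" "h / Pi0 h r \<le> 1 / Xi"
    using assms u \<open>u > 0\<close> by auto
qed

lemma deriv_scaled_cosh:
  fixes P x :: real
  assumes "P \<noteq> 0"
  shows "deriv (\<lambda>y. P * cosh (y / P)) x = sinh (x / P)"
  by (rule DERIV_imp_deriv) (use assms in \<open>auto intro!: derivative_eq_intros\<close>)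

lemma fprime_sinh: "fprime (sinh s) = sinh s * ((sinh s)\<^sup>2 + 2) / (cosh s) ^ 3"
proof -
  have "(1 + (sinh s)\<^sup>2) powr (3/2) = ((cosh s)\<^sup>2) powr (3/2)"
    by (simp add: cosh_square_eq add.commute)
  also have "\<dots> = (cosh s) ^ 3"
    by (simp add: powr_powr powr_realpow flip: powr_numeral)
  finally show ?thesis
    by (simp add: fprime_def)
qed

lemma has_real_derivative_fprime_sinh_div_cosh:
  fixes t :: real
  shows "((\<lambda>t. fprime (sinh t) / cosh t) has_real_derivative
           (4 - (cosh t) ^ 4 - (cosh t)\<^sup>2) / (cosh t) ^ 5) (at t)"
proof -
  have "(\<lambda>t. fprime (sinh t) / cosh t) = (\<lambda>t. sinh t * ((sinh t)\<^sup>2 + 2) / (cosh t) ^ 4)"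
    by (simp add: fprime_sinh fun_eq_iff eval_nat_numeral)
  have quotient_rule_value:
    "((c * (s\<^sup>2 + 2) + 2 * (c * s) * s) * c ^ 4 - s * (s\<^sup>2 + 2) * (4 * (s * c ^ 3))) / c ^ 8
       = (4 - c ^ 4 - c\<^sup>2) / c ^ 5"
    if "c \<noteq> 0" "s\<^sup>2 = c\<^sup>2 - 1" for s c :: real
  proof -
    have "(c * (s\<^sup>2 + 2) + 2 * (c * s) * s) * c ^ 4 - s * (s\<^sup>2 + 2) * (4 * (s * c ^ 3))
        = c ^ 3 * (4 - c ^ 4 - c\<^sup>2)"
      using that(2) by algebra
    with that(1) show ?thesis
      by (simp add: divide_simps)
  qed
  show ?thesis
    unfolding \<open>(\<lambda>t. fprime (sinh t) / cosh t) = _\<close>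
    by (rule derivative_eq_intros refl | simp add: quotient_rule_value[OF _ sinh_square_eq])+
qed

theorem lemma4p3:
  fixes h r :: real
  assumes "h > 0" and "r > 0" and "h / r \<le> omega"
  shows "\<forall>x\<in>{-h..h}.
           deriv (\<lambda>y. (1 / rho0 h r y) * fprime (deriv (rho0 h r) y)) x \<ge> 0"
proof
  fix x
  assume x: "x \<in> {-h..h}"
  define P where "P = Pi0 h r"
  define g :: "real \<Rightarrow> real" where "g t = fprime (sinh t) / cosh t" for t
  define c where "c = cosh (x / P)"
  have P: "P > 0" "h / P \<le> 1 / Xi"
    using Pi0_pos_and_ratio_le[OF assms] unfolding P_def by auto
  have "\<bar>x / P\<bar> \<le> h / P"
    using x P(1) by (auto simp: abs_le_iff divide_right_mono)
  then have "c \<le> 124/100"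
    unfolding c_def using P(2) inverse_Xi_less by (intro cosh_le_124_100) linarith
  moreover have "0 \<le> c"
    unfolding c_def by simp
  ultimately have "c ^ 4 \<le> (124/100) ^ 4" "c\<^sup>2 \<le> (124/100)\<^sup>2"
    by (auto intro: power_mono)
  then have "c ^ 4 + c\<^sup>2 \<le> 4"
    by (simp add: power_divide)
  have rho: "rho0 h r = (\<lambda>y. P * cosh (y / P))"
    by (simp add: rho0_def P_def fun_eq_iff)
  have "(\<lambda>y. (1 / rho0 h r y) * fprime (deriv (rho0 h r) y)) = (\<lambda>y. g (y / P) / P)"
    unfolding rho using P(1)
    by (simp add: deriv_scaled_cosh g_def fun_eq_iff)
  moreover have "((\<lambda>y. g (y / P) / P) has_real_derivative
                   (4 - c ^ 4 - c\<^sup>2) / c ^ 5 * (1 / P) / P) (at x)"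
    unfolding c_def g_def
    by (intro DERIV_cdivide DERIV_chain2[OF has_real_derivative_fprime_sinh_div_cosh])
       (auto intro!: derivative_eq_intros)
  ultimately have "deriv (\<lambda>y. (1 / rho0 h r y) * fprime (deriv (rho0 h r) y)) x
                     = (4 - c ^ 4 - c\<^sup>2) / c ^ 5 * (1 / P) / P"
    by (simp add: DERIV_imp_deriv)
  also have "\<dots> \<ge> 0"
    using \<open>c ^ 4 + c\<^sup>2 \<le> 4\<close> \<open>0 \<le> c\<close> P(1) by simp
  finally show "deriv (\<lambda>y. (1 / rho0 h r y) * fprime (deriv (rho0 h r) y)) x \<ge> 0" .
qed

end
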